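(* Let $k,D,s^{\mathrm{in}}>0$, $K_1,\dots,K_5>0$, and let $\mu:[0,\infty)\to[0,\infty)$ satisfy $\mu(0)=0$, $\mu(s)>0$ for $s>0$, $\mu\le\mu_{\max}<\infty$, continuous at $0$. For $x=(b,s)^*\in\mathbb{R}_+^2$ let $$\lambda_1(x)=K_1\mu(s)b,\ \lambda_2(x)=K_2k\mu(s)b,\ \lambda_3(x)=K_3Ds^{\mathrm{in}},\ \lambda_4(x)=K_4Db,\ \lambda_5(x)=K_5Ds,$$ $$\nu_1(x)=\begin{pmatrix}\frac1{K_1}\\0\end{pmatrix},\ \nu_2(x)=-\begin{pmatrix}0\\ \frac{1\wedge K_2 s}{K_2}\end{pmatrix},\ \nu_3(x)=\begin{pmatrix}0\\ \frac1{K_3}\end{pmatrix},\ \nu_4(x)=-\begin{pmatrix}\frac{1\wedge K_4 b}{K_4}\\0\end{pmatrix},\ \nu_5(x)=-\begin{pmatrix}0\\ \frac{1\wedge K_5 s}{K_5}\end{pmatrix}.$$ Let $(X_t)$ be the pure jump Markov process on $\mathbb{R}_+^2$ with infinitesimal generator $\mathcal{A}\phi(x)=\sum_{i=1}^5\lambda_i(x)[\phi(x+\nu_i(x))-\phi(x)]$, with jump times $\tau_0=0$, $\tau_n=\inf\{t>\tau_{n-1}: X_t\ne X_{\tau_{n-1}}\}$. Then $X$ is non-explosive, i.e. $\tau_n\to\infty$ almost surely. Moreover, for every $p\ge1$ such that $\mathbb{E}(|X_0|^p)<\infty$ and every $T>0$ there is a constant $C>0$ such that $\mathbb{E}(|X_t|^p)\le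 C$ for all $t\le T$.
   Context: $a\wedge c=\min(a,c)$ and $|\cdot|$ is the Euclidean norm. From state $x$ the process jumps by $\nu_i(x)$ at rate $\lambda_i(x)$, $i=1,\dots,5$, independently. *)

theory Defs
  imports "HOL-Probability.Probability"
begin

definition chem_rate ::
  "real \<Rightarrow> real \<Rightarrow> real \<Rightarrow> (nat \<Rightarrow> real) \<Rightarrow> (real \<Rightarrow> real) \<Rightarrow> nat \<Rightarrow> real \<times> real \<Rightarrow> real" where
  "chem_rate k D s_in K \<mu> i x =
     (let b = fst x; s = snd x in
      if i = 1 then K 1 * \<mu> s * b
      else if i = 2 then K 2 * k * \<mu> s * b
      else if i = 3 then K 3 * D * s_in
      else if i = 4 then K 4 * D * b
      else if i = 5 then K 5 * D * s
      else 0)"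

definition chem_jump :: "(nat \<Rightarrow> real) \<Rightarrow> nat \<Rightarrow> real \<times> real \<Rightarrow> real \<times> real" where
  "chem_jump K i x =
     (let b = fst x; s = snd x in
      if i = 1 then (1 / K 1, 0)
      else if i = 2 then - (0, min 1 (K 2 * s) / K 2)
      else if i = 3 then (0, 1 / K 3)
      else if i = 4 then - (min 1 (K 4 * b) / K 4, 0)
      else if i = 5 then - (0, min 1 (K 5 * s) / K 5)
      else (0, 0))"

definition chem_total :: "real \<Rightarrow> real \<Rightarrow> real \<Rightarrow> (nat \<Rightarrow> real) \<Rightarrow> (real \<Rightarrow> real) \<Rightarrow> real \<times> real \<Rightarrow> real" where
  "chem_total k D s_in K \<mu> x = (\<Sum>i\<in>{1..5}. chem_rate k D s_in K \<mu> i x)"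

text \<open>Selection of the jump type from a uniform variable u in [0,1]:
  type i is chosen iff the cumulative rates satisfy c_(i-1) <= u*Lambda < c_i,
  i.e. with probability lambda_i / Lambda.\<close>
definition chem_select :: "real \<Rightarrow> real \<Rightarrow> real \<Rightarrow> (nat \<Rightarrow> real) \<Rightarrow> (real \<Rightarrow> real) \<Rightarrow> real \<times> real \<Rightarrow> real \<Rightarrow> nat" where
  "chem_select k D s_in K \<mu> x u =
     (if \<exists>i\<in>{1..5}. u * chem_total k D s_in K \<mu> x < (\<Sum>j\<in>{1..i}. chem_rate k D s_in K \<mu> j x)
      then (LEAST i. i \<in> {1..5} \<and> u * chem_total k D s_in K \<mu> x < (\<Sum>j\<in>{1..i}. chem_rate k D s_in K \<mu> j x))
      else 5)"

primrec chem_chain ::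
  "real \<Rightarrow> real \<Rightarrow> real \<Rightarrow> (nat \<Rightarrow> real) \<Rightarrow> (real \<Rightarrow> real) \<Rightarrow>
   (nat \<Rightarrow> 'a \<Rightarrow> real) \<Rightarrow> ('a \<Rightarrow> real \<times> real) \<Rightarrow> nat \<Rightarrow> 'a \<Rightarrow> real \<times> real" where
  "chem_chain k D s_in K \<mu> U X0 0 \<omega> = X0 \<omega>"
| "chem_chain k D s_in K \<mu> U X0 (Suc n) \<omega> =
     (let x = chem_chain k D s_in K \<mu> U X0 n \<omega>
      in x + chem_jump K (chem_select k D s_in K \<mu> x (U n \<omega>)) x)"

text \<open>Jump times of the construction: holding time in state x is E n / Lambda(x),
  with E n standard exponential.\<close>
primrec chem_T ::
  "real \<Rightarrow> real \<Rightarrow> real \<Rightarrow> (nat \<Rightarrow> real) \<Rightarrow> (real \<Rightarrow> real) \<Rightarrow>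
   (nat \<Rightarrow> 'a \<Rightarrow> real) \<Rightarrow> (nat \<Rightarrow> 'a \<Rightarrow> real) \<Rightarrow> ('a \<Rightarrow> real \<times> real) \<Rightarrow> nat \<Rightarrow> 'a \<Rightarrow> real" where
  "chem_T k D s_in K \<mu> E U X0 0 \<omega> = 0"
| "chem_T k D s_in K \<mu> E U X0 (Suc n) \<omega> =
     chem_T k D s_in K \<mu> E U X0 n \<omega> + E n \<omega> / chem_total k D s_in K \<mu> (chem_chain k D s_in K \<mu> U X0 n \<omega>)"

text \<open>The pure jump process X_t (piecewise constant, right-continuous).  After a possible
  explosion time (sup of the jump times) it is set to (0,0) by convention.\<close>
definition chem_X ::
  "real \<Rightarrow> real \<Rightarrow> real \<Rightarrow> (nat \<Rightarrow> real) \<Rightarrow> (real \<Rightarrow> real) \<Rightarrow>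
   (nat \<Rightarrow> 'a \<Rightarrow> real) \<Rightarrow> (nat \<Rightarrow> 'a \<Rightarrow> real) \<Rightarrow> ('a \<Rightarrow> real \<times> real) \<Rightarrow> real \<Rightarrow> 'a \<Rightarrow> real \<times> real" where
  "chem_X k D s_in K \<mu> E U X0 t \<omega> =
     (if \<exists>n. t < chem_T k D s_in K \<mu> E U X0 (Suc n) \<omega>
      then chem_chain k D s_in K \<mu> U X0 (LEAST n. t < chem_T k D s_in K \<mu> E U X0 (Suc n) \<omega>) \<omega>
      else (0, 0))"

text \<open>Jump times as in the paper: tau_0 = 0,
  tau_n = inf { t > tau_(n-1) : X_t ~= X_(tau_(n-1)) }  (inf of the empty set = infinity).\<close>
primrec jump_time :: "(real \<Rightarrow> 'a \<Rightarrow> 'b) \<Rightarrow> nat \<Rightarrow> 'a \<Rightarrow> ereal" where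
  "jump_time X 0 \<omega> = 0"
| "jump_time X (Suc n) \<omega> =
     Inf {ereal t | t. jump_time X n \<omega> < ereal t \<and> X t \<omega> \<noteq> X (real_of_ereal (jump_time X n \<omega>)) \<omega>}"

end

theory Submission
  imports Defs
begin

text \<open>
  Each jump raises \<open>b + s\<close> by at most \<open>1/K\<^sub>1 + 1/K\<^sub>3\<close>, so after \<open>j\<close> jumps the total rate
  is at most \<open>c (A + j)\<close> with \<open>A = 1 + b\<^sub>0 + s\<^sub>0\<close>, and the \<open>n\<close>-th jump epoch dominates
  \<open>\<Sum>j<n. E\<^sub>j / (c (A + j))\<close>.  For i.i.d. standard exponentials the Laplace transform gives
  \<open>P (\<Sum>j<n. E\<^sub>j / (j + 1) \<le> u) \<le> e\<^sup>u / (n + 1)\<close>, so this series diverges almost surely: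
  the process does not explode.

  For the moments, \<open>m\<close> jumps before time \<open>t\<close> give \<open>|X\<^sub>t| \<le> 2 |X\<^sub>0| + m (1/K\<^sub>1 + 1/K\<^sub>3)\<close>, and
  \<open>m\<^sup>p \<le> \<Sum>n\<le>m. p n\<^sup>p\<^sup>-\<^sup>1\<close>.  The \<open>n\<close>-th jump can only happen before \<open>T\<close> if
  \<open>\<Sum>a\<le>j<n. E\<^sub>j / j \<le> 2 c T\<close> with \<open>a = \<lceil>A\<rceil>\<close>; by the same Chernoff bound this has probability
  \<open>O ((a / n)\<^sup>r)\<close> for any \<open>r\<close>, which is summable against \<open>p n\<^sup>p\<^sup>-\<^sup>1\<close> once \<open>r \<ge> p + 1\<close>.  Since
  \<open>X\<^sub>0\<close> is independent of the clocks, averaging over the level sets \<open>a = \<lceil>A\<rceil>\<close> leaves a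
  bound polynomial in \<open>|X\<^sub>0|\<close>.
\<close>

section \<open>Elementary estimates\<close>

lemma powr_add_le:
  fixes x y p :: real
  assumes "0 \<le> x" and "0 \<le> y" and "0 \<le> p"
  shows "(x + y) powr p \<le> 2 powr p * (x powr p + y powr p)"
proof -
  have "(x + y) powr p \<le> (2 * max x y) powr p"
    using assms by (intro powr_mono2) auto
  also have "\<dots> = 2 powr p * max x y powr p"
    using assms by (simp add: powr_mult)
  also have "max x y powr p \<le> x powr p + y powr p"
    by (cases "x \<le> y") (auto simp: max_def)
  finally show ?thesis by simp
qed

lemma powr_le_sum_derivative:
  fixes p :: real
  assumes p: "1 \<le> p"
  shows "real m powr p \<le> (\<Sum>n\<in>{1..m}. p * real n powr (p - 1))"
proof (induction m)
  case 0
  then show ?case by simp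
next
  case (Suc m)
  have step: "real (Suc m) powr p - real m powr p \<le> p * real (Suc m) powr (p - 1)"
  proof (cases "m = 0")
    case False
    obtain z where z: "real m < z" "z < real (Suc m)"
      and eq: "real (Suc m) powr p - real m powr p = (real (Suc m) - real m) * (p * z powr (p - 1))"
      using MVT2[of "real m" "real (Suc m)" "\<lambda>x. x powr p" "\<lambda>x. p * x powr (p - 1)"] False
      by (force intro!: has_real_derivative_powr)
    have "z powr (p - 1) \<le> real (Suc m) powr (p - 1)"
      using z p False by (intro powr_mono2) auto
    then show ?thesis unfolding eq using p by simp
  qed (use p in simp)
  then show ?case using Suc by simp
qed

lemma sum_inverse_square_tail_le:
  fixes L N :: nat
  assumes L: "1 \<le> L"
  shows "(\<Sum>n\<in>{L<..<N}. 1 / real n ^ 2) \<le> 1 / real L"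
proof -
  \<comment> \<open>telescoping with \<open>1 / n\<^sup>2 \<le> 1 / (n - 1) - 1 / n\<close>\<close>
  have tele: "(\<Sum>n\<in>{L<..<L + k}. 1 / real n ^ 2) \<le> 1 / real L - 1 / real (L + k - 1)"
    if "1 \<le> k" for k
    using that
  proof (induction k rule: nat_induct_at_least)
    case base
    have "{L<..<L + 1} = {}" by auto
    then show ?case by simp
  next
    case (Suc k)
    define x where "x = real (L + k)"
    have x: "2 \<le> x" and x1: "real (L + k - 1) = x - 1"
      using L Suc.hyps by (auto simp: x_def)
    have "1 / x ^ 2 \<le> 1 / (x * (x - 1))"
      using x by (intro divide_left_mono) (auto simp: power2_eq_square)
    also have "\<dots> = 1 / (x - 1) - 1 / x"
      using x by (simp add: field_simps)
    finally have "1 / x ^ 2 \<le> 1 / (x - 1) - 1 / x" .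
    moreover have "{L<..<L + Suc k} = insert (L + k) {L<..<L + k}"
      using Suc.hyps by auto
    ultimately show ?case
      using Suc.IH x1 by (simp add: x_def)
  qed
  show ?thesis
  proof (cases "N \<le> L")
    case False
    then have "(\<Sum>n\<in>{L<..<N}. 1 / real n ^ 2) \<le> 1 / real L - 1 / (real N - 1)"
      using tele[of "N - L"] by simp
    moreover have "0 \<le> 1 / (real N - 1)"
      using False L by simp
    ultimately show ?thesis by linarith
  qed simp
qed

lemma prod_ratio_telescope:
  fixes a n r :: nat
  assumes a: "1 \<le> a" and an: "a \<le> n"
  shows "(\<Prod>j\<in>{a..<n}. 1 / (1 + real r / real j)) * (\<Prod>i<r. real n + real i) = (\<Prod>i<r. real a + real i)"
  using an
proof (induction n rule: nat_induct_at_least)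
  case (Suc n)
  have n: "1 \<le> real n" using Suc.hyps a by simp
  have shift: "(\<Prod>i<r. real (Suc n) + real i) * real n = (\<Prod>i<r. real n + real i) * (real n + real r)"
    using prod.lessThan_Suc_shift[of "\<lambda>i. real n + real i" r] by (simp add: add_ac mult_ac)
  have "{a..<Suc n} = insert n {a..<n}" using Suc.hyps by auto
  then have "(\<Prod>j\<in>{a..<Suc n}. 1 / (1 + real r / real j)) * (\<Prod>i<r. real (Suc n) + real i)
      = (\<Prod>j\<in>{a..<n}. 1 / (1 + real r / real j)) * ((\<Prod>i<r. real (Suc n) + real i) * real n / (real n + real r))"
    using n by (simp add: field_simps)
  also have "\<dots> = (\<Prod>j\<in>{a..<n}. 1 / (1 + real r / real j)) * (\<Prod>i<r. real n + real i)"
    unfolding shift using n by simp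
  finally show ?case using Suc.IH by simp
qed simp

lemma prod_ratio_le:
  fixes a n r :: nat
  assumes an: "a \<le> n" and n: "1 \<le> n"
  shows "(\<Prod>j\<in>{a..<n}. 1 / (1 + real r / real j)) \<le> ((real a + real r + 1) / real n) ^ r"
proof -
  define a' where "a' = max a 1"
  have a': "1 \<le> a'" "a' \<le> n" "real a' \<le> real a + 1"
    using an n by (auto simp: a'_def)
  \<comment> \<open>the factor for \<open>j = 0\<close> is \<open>1\<close>, since \<open>r / 0 = 0\<close>\<close>
  have "(\<Prod>j\<in>{a..<n}. 1 / (1 + real r / real j)) = (\<Prod>j\<in>{a'..<n}. 1 / (1 + real r / real j))"
  proof (cases "a = 0")
    case True
    then have "{a..<n} = insert 0 {a'..<n}" using n by (auto simp: a'_def)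
    then show ?thesis by (simp add: a'_def True)
  qed (simp add: a'_def)
  also have "\<dots> = (\<Prod>i<r. real a' + real i) / (\<Prod>i<r. real n + real i)"
    using prod_ratio_telescope[OF a'(1,2), of r] n
    by (simp add: eq_divide_eq prod_pos add_pos_nonneg)
  also have "\<dots> = (\<Prod>i<r. (real a' + real i) / (real n + real i))"
    by (rule prod_dividef[symmetric])
  also have "\<dots> \<le> (\<Prod>i<r. (real a + real r + 1) / real n)"
  proof (rule prod_mono)
    fix i assume "i \<in> {..<r}"
    then have "(real a' + real i) / (real n + real i) \<le> (real a + real r + 1) / real n"
      using a' n by (intro frac_le) auto
    then show "0 \<le> (real a' + real i) / (real n + real i) \<and>
        (real a' + real i) / (real n + real i) \<le> (real a + real r + 1) / real n" by simp
  qed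
  finally show ?thesis by simp
qed

lemma powr_times_ratio_power_le:
  fixes x y p :: real and r :: nat
  assumes x: "1 \<le> x" and xy: "x \<le> y" and r: "p + 1 \<le> real r"
  shows "y powr (p - 1) * (x / y) ^ r \<le> x powr (p + 1) / y ^ 2"
proof -
  have q: "0 < x / y" "x / y \<le> 1" using x xy by auto
  have "(x / y) ^ r = (x / y) powr (p + 1) * (x / y) powr (real r - (p + 1))"
    using q by (simp add: powr_realpow[symmetric] powr_add[symmetric])
  also have "\<dots> \<le> (x / y) powr (p + 1)"
    using q r powr_mono2[of "real r - (p + 1)" "x / y" 1] by (intro mult_left_le) auto
  also have "\<dots> = x powr (p + 1) / y powr (p + 1)"
    using x xy by (simp add: powr_divide)
  finally have "y powr (p - 1) * (x / y) ^ r \<le> y powr (p - 1) * (x powr (p + 1) / y powr (p + 1))"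
    by (rule mult_left_mono) simp
  also have "\<dots> = x powr (p + 1) * (y powr (p - 1) / y powr (p + 1))"
    by simp
  also have "y powr (p - 1) / y powr (p + 1) = y powr (- 2)"
    by (simp add: powr_diff[symmetric])
  also have "\<dots> = 1 / y ^ 2"
    using x xy by (simp add: powr_minus powr_numeral divide_inverse)
  finally show ?thesis by simp
qed

lemma tail_weighted_power_sum_le:
  fixes p e :: real and a r N :: nat
  assumes p: "1 \<le> p" and r: "p + 1 \<le> real r" and e: "0 < e"
  shows "(\<Sum>n<N. p * real n powr (p - 1) * min 1 (e * (\<Prod>j\<in>{a..<n}. 1 / (1 + real r / real j))))
         \<le> p * (2 + e) * real (a + r + 1) powr p"
proof -
  define L where "L = a + r + 1"
  have L: "1 \<le> L" "real L = real a + real r + 1" unfolding L_def by simp_all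
  define f where "f n = p * real n powr (p - 1) * min 1 (e * (\<Prod>j\<in>{a..<n}. 1 / (1 + real r / real j)))"
    for n
  have f_nonneg: "0 \<le> f n" for n
    unfolding f_def using p e by (auto intro!: mult_nonneg_nonneg prod_nonneg)
  have head: "(\<Sum>n\<in>{..L}. f n) \<le> 2 * p * real L powr p"
  proof -
    have "(\<Sum>n\<in>{..L}. f n) \<le> of_nat (card {..L}) * (p * real L powr (p - 1))"
    proof (rule sum_bounded_above)
      fix n assume "n \<in> {..L}"
      then have "real n powr (p - 1) \<le> real L powr (p - 1)"
        using p by (intro powr_mono2) auto
      moreover have "f n \<le> p * real n powr (p - 1)"
        unfolding f_def using p by (intro mult_left_le) auto
      ultimately show "f n \<le> p * real L powr (p - 1)"
        using p by (smt (verit) mult_left_mono)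
    qed
    also have "\<dots> \<le> (2 * real L) * (p * real L powr (p - 1))"
      using L p by (intro mult_right_mono) auto
    also have "\<dots> = 2 * p * (real L powr 1 * real L powr (p - 1))"
      using L by simp
    also have "\<dots> = 2 * p * real L powr p"
      by (subst powr_add[symmetric]) simp
    finally show ?thesis .
  qed
  have tail: "(\<Sum>n\<in>{L<..<N}. f n) \<le> p * e * real L powr p"
  proof -
    have "f n \<le> p * e * real L powr (p + 1) * (1 / real n ^ 2)" if "n \<in> {L<..<N}" for n
    proof -
      have n: "L < n" using that by simp
      have "min 1 (e * (\<Prod>j\<in>{a..<n}. 1 / (1 + real r / real j))) \<le> e * (real L / real n) ^ r"
        using prod_ratio_le[of a n r] n e L(2) by (auto intro: min.coboundedI2)
      then have "f n \<le> p * real n powr (p - 1) * (e * (real L / real n) ^ r)"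
        unfolding f_def using p by (intro mult_left_mono) auto
      also have "\<dots> = p * e * (real n powr (p - 1) * (real L / real n) ^ r)"
        by simp
      also have "\<dots> \<le> p * e * (real L powr (p + 1) / real n ^ 2)"
        using powr_times_ratio_power_le[of "real L" "real n" p r] L n p r e by (intro mult_left_mono) auto
      finally show ?thesis by simp
    qed
    then have "(\<Sum>n\<in>{L<..<N}. f n) \<le> p * e * real L powr (p + 1) * (\<Sum>n\<in>{L<..<N}. 1 / real n ^ 2)"
      by (auto simp: sum_distrib_left intro: sum_mono)
    also have "\<dots> \<le> p * e * real L powr (p + 1) * (1 / real L)"
      using sum_inverse_square_tail_le[OF L(1), of N] p e by (intro mult_left_mono) auto
    also have "\<dots> = p * e * real L powr p"
      using L by (simp add: powr_add)
    finally show ?thesis .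
  qed
  have "(\<Sum>n<N. f n) \<le> (\<Sum>n\<in>{..L} \<union> {L<..<N}. f n)"
    by (intro sum_mono2) (use f_nonneg in auto)
  also have "\<dots> = (\<Sum>n\<in>{..L}. f n) + (\<Sum>n\<in>{L<..<N}. f n)"
    by (rule sum.union_disjoint) auto
  finally show ?thesis
    using head tail unfolding f_def L_def by (simp add: algebra_simps)
qed

section \<open>Sums of independent exponential variables\<close>

lemma (in prob_space) indep_sets_reindex:
  assumes indep: "indep_sets F (f ` I)" and inj: "inj_on f I"
  shows "indep_sets (\<lambda>i. F (f i)) I"
  unfolding indep_sets_def
proof (intro conjI ballI allI impI)
  show "F (f i) \<subseteq> events" if "i \<in> I" for i
    using indep that unfolding indep_sets_def by blast
  fix J A assume J: "J \<subseteq> I" "J \<noteq> {}" "finite J" and A: "A \<in> Pi J (\<lambda>i. F (f i))"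
  define A' where "A' = A \<circ> the_inv_into J f"
  have injJ: "inj_on f J" using inj J(1) by (rule inj_on_subset)
  have A'f: "A' (f j) = A j" if "j \<in> J" for j
    unfolding A'_def using the_inv_into_f_f[OF injJ that] by simp
  have "A' \<in> Pi (f ` J) F" using A A'f by auto
  then have "prob (\<Inter>j\<in>f ` J. A' j) = (\<Prod>j\<in>f ` J. prob (A' j))"
    using indep J unfolding indep_sets_def by (metis image_is_empty image_mono finite_imageI)
  then show "prob (\<Inter>j\<in>J. A j) = (\<Prod>j\<in>J. prob (A j))"
    using A'f by (simp add: prod.reindex[OF injJ])
qed

lemma (in prob_space) indep_vars_reindex:
  assumes "indep_vars M' X (f ` I)" and "inj_on f I"
  shows "indep_vars (\<lambda>i. M' (f i)) (\<lambda>i. X (f i)) I"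
  using assms indep_sets_reindex[of "\<lambda>i. sigma_sets (space M) {X i -` A \<inter> space M |A. A \<in> sets (M' i)}" f I]
  unfolding indep_vars_def by auto

lemma (in prob_space) exponential_laplace:
  assumes X: "distributed M lborel X (exponential_density 1)" and \<theta>: "0 \<le> \<theta>"
  shows "(\<integral>\<^sup>+\<omega>. ennreal (exp (- \<theta> * X \<omega>)) \<partial>M) = ennreal (1 / (1 + \<theta>))"
proof -
  have "(\<integral>\<^sup>+\<omega>. ennreal (exp (- \<theta> * X \<omega>)) \<partial>M)
      = (\<integral>\<^sup>+x. ennreal (exponential_density 1 x) * ennreal (exp (- \<theta> * x)) \<partial>lborel)"
    by (rule distributed_nn_integral[OF X, symmetric]) simp
  also have "\<dots> = (\<integral>\<^sup>+x. ennreal (1 / (1 + \<theta>)) * ennreal (exponential_density (1 + \<theta>) x) \<partial>lborel)"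
  proof (rule nn_integral_cong)
    fix x :: real
    have "exponential_density 1 x * exp (- \<theta> * x) = 1 / (1 + \<theta>) * exponential_density (1 + \<theta>) x"
      using \<theta> by (auto simp: exponential_density_def exp_add[symmetric] field_simps)
    then show "ennreal (exponential_density 1 x) * ennreal (exp (- \<theta> * x))
        = ennreal (1 / (1 + \<theta>)) * ennreal (exponential_density (1 + \<theta>) x)"
      using \<theta> by (simp add: ennreal_mult'[symmetric] exponential_density_nonneg)
  qed
  also have "\<dots> = ennreal (1 / (1 + \<theta>)) * (\<integral>\<^sup>+x. ennreal (exponential_density (1 + \<theta>) x) \<partial>lborel)"
    by (rule nn_integral_cmult) simp
  also have "(\<integral>\<^sup>+x. ennreal (exponential_density (1 + \<theta>) x) \<partial>lborel) = 1"
    using prob_space.emeasure_space_1[OF prob_space_exponential_density, of "1 + \<theta>"] \<theta>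
    by (simp add: emeasure_density)
  finally show ?thesis by simp
qed

lemma (in prob_space) exponential_weighted_sum_le_prob:
  assumes E: "\<And>j. distributed M lborel (E j) (exponential_density 1)"
    and indep: "indep_vars (\<lambda>_. borel) E UNIV"
    and J: "finite J" and \<theta>: "\<And>j. j \<in> J \<Longrightarrow> 0 \<le> \<theta> j"
  shows "prob {\<omega>\<in>space M. (\<Sum>j\<in>J. \<theta> j * E j \<omega>) \<le> u} \<le> exp u * (\<Prod>j\<in>J. 1 / (1 + \<theta> j))"
proof -
  have [measurable]: "E j \<in> borel_measurable M" for j
    using distributed_measurable[OF E] by simp
  let ?Z = "\<lambda>j \<omega>. ennreal (exp (- \<theta> j * E j \<omega>))"
  have indepZ: "indep_vars (\<lambda>_. borel) ?Z J"
    by (rule indep_vars_compose2[OF indep_vars_subset[OF indep]]) auto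
  \<comment> \<open>Chernoff: the indicator of the event is dominated by \<open>exp (u - \<Sum>j\<in>J. \<theta> j * E j)\<close>\<close>
  have "emeasure M {\<omega>\<in>space M. (\<Sum>j\<in>J. \<theta> j * E j \<omega>) \<le> u}
      = (\<integral>\<^sup>+\<omega>. indicator {\<omega>\<in>space M. (\<Sum>j\<in>J. \<theta> j * E j \<omega>) \<le> u} \<omega> \<partial>M)"
    by (rule nn_integral_indicator[symmetric]) measurable
  also have "\<dots> \<le> (\<integral>\<^sup>+\<omega>. ennreal (exp u) * (\<Prod>j\<in>J. ?Z j \<omega>) \<partial>M)"
  proof (rule nn_integral_mono)
    fix \<omega>
    have "(\<Prod>j\<in>J. ?Z j \<omega>) = ennreal (exp (- (\<Sum>j\<in>J. \<theta> j * E j \<omega>)))"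
      using J by (simp add: prod_ennreal exp_sum[symmetric] sum_negf)
    then show "indicator {\<omega>\<in>space M. (\<Sum>j\<in>J. \<theta> j * E j \<omega>) \<le> u} \<omega> \<le> ennreal (exp u) * (\<Prod>j\<in>J. ?Z j \<omega>)"
      by (auto simp: indicator_def ennreal_mult'[symmetric] exp_add[symmetric])
  qed
  also have "\<dots> = ennreal (exp u) * (\<integral>\<^sup>+\<omega>. (\<Prod>j\<in>J. ?Z j \<omega>) \<partial>M)"
    by (rule nn_integral_cmult) measurable
  also have "(\<integral>\<^sup>+\<omega>. (\<Prod>j\<in>J. ?Z j \<omega>) \<partial>M) = (\<Prod>j\<in>J. \<integral>\<^sup>+\<omega>. ?Z j \<omega> \<partial>M)"
    by (rule indep_vars_nn_integral[OF J indepZ]) simp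
  also have "\<dots> = (\<Prod>j\<in>J. ennreal (1 / (1 + \<theta> j)))"
    by (intro prod.cong refl exponential_laplace[OF E] \<theta>)
  also have "\<dots> = ennreal (\<Prod>j\<in>J. 1 / (1 + \<theta> j))"
    by (rule prod_ennreal) (use \<theta> in auto)
  finally show ?thesis
    using \<theta> by (simp add: emeasure_eq_measure ennreal_mult'[symmetric] prod_nonneg)
qed

lemma (in prob_space) AE_exponential_nonneg:
  assumes E: "distributed M lborel X (exponential_density 1)"
  shows "AE \<omega> in M. 0 \<le> X \<omega>"
proof (rule AE_I')
  have [measurable]: "X \<in> borel_measurable M"
    using distributed_measurable[OF E] by simp
  have "emeasure M (X -` {..<0} \<inter> space M) = (\<integral>\<^sup>+x. ennreal (exponential_density 1 x) * indicator {..<0} x \<partial>lborel)"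
    by (rule distributed_emeasure[OF E]) simp
  also have "\<dots> = 0"
    by (auto intro!: nn_integral_zero' simp: exponential_density_def indicator_def)
  finally show "X -` {..<0} \<inter> space M \<in> null_sets M"
    by (auto simp: null_sets_def)
qed auto

lemma (in prob_space) AE_exponential_harmonic_sum_unbounded:
  assumes E: "\<And>j. distributed M lborel (E j) (exponential_density 1)"
    and indep: "indep_vars (\<lambda>_. borel) E UNIV"
  shows "AE \<omega> in M. \<forall>B. \<exists>n. B < (\<Sum>j<n. E j \<omega> / (real j + 1))"
proof -
  have [measurable]: "E j \<in> borel_measurable M" for j
    using distributed_measurable[OF E] by simp
  define N where "N b = {\<omega>\<in>space M. \<forall>n. (\<Sum>j<n. E j \<omega> / (real j + 1)) \<le> real b}"
    for b :: nat
  have "AE \<omega> in M. \<exists>n. real b < (\<Sum>j<n. E j \<omega> / (real j + 1))" for b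
  proof (rule AE_I'[of "N b"])
    have [measurable]: "N b \<in> sets M" unfolding N_def by measurable
    have "prob (N b) \<le> exp (real b) * inverse (real (Suc n))" for n
    proof -
      have "prob (N b) \<le> prob {\<omega>\<in>space M. (\<Sum>j\<in>{..<n}. 1 / (real j + 1) * E j \<omega>) \<le> real b}"
        by (rule finite_measure_mono) (auto simp: N_def)
      also have "\<dots> \<le> exp (real b) * (\<Prod>j<n. 1 / (1 + 1 / (real j + 1)))"
        by (rule exponential_weighted_sum_le_prob[OF E indep]) auto
      also have "(\<Prod>j<n. 1 / (1 + 1 / (real j + 1))) = inverse (real (Suc n))"
        by (induction n) (auto simp: field_simps)
      finally show ?thesis .
    qed
    then have "prob (N b) \<le> 0"
      using LIMSEQ_le_const[OF tendsto_mult_right_zero[OF LIMSEQ_inverse_real_of_nat]] by blast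
    then show "N b \<in> null_sets M"
      by (simp add: emeasure_eq_measure null_sets_def measure_le_0_iff)
  qed (auto simp: N_def not_less)
  then have "AE \<omega> in M. \<forall>b::nat. \<exists>n. real b < (\<Sum>j<n. E j \<omega> / (real j + 1))"
    by (simp add: AE_all_countable)
  then show ?thesis
    by eventually_elim (meson reals_Archimedean2 order_less_trans)
qed

section \<open>Paths of the jump process\<close>

lemma chem_total_eq:
  "chem_total k D s_in K \<mu> x = K 1 * \<mu> (snd x) * fst x + K 2 * k * \<mu> (snd x) * fst x
     + K 3 * D * s_in + K 4 * D * fst x + K 5 * D * snd x"
proof -
  have "{1..5::nat} = {1, 2, 3, 4, 5}" by auto
  then show ?thesis by (simp add: chem_total_def chem_rate_def Let_def)
qed

lemma chem_T_eq_sum: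
  "chem_T k D s_in K \<mu> E U X0 n \<omega> =
     (\<Sum>j<n. E j \<omega> / chem_total k D s_in K \<mu> (chem_chain k D s_in K \<mu> U X0 j \<omega>))"
  by (induction n) auto

lemma ereal_le_jump_time:
  fixes X :: "real \<Rightarrow> 'a \<Rightarrow> 'b" and T :: "nat \<Rightarrow> real"
  assumes mono: "mono T" and T0: "T 0 = 0"
    and X: "\<And>t. X t \<omega> = (if \<exists>n. t < T (Suc n) then Y (LEAST n. t < T (Suc n)) else z)"
  shows "ereal (T n) \<le> jump_time X n \<omega>"
proof (induction n)
  case 0
  then show ?case using T0 by simp
next
  case (Suc n)
  show ?case
  proof (cases "jump_time X n \<omega>")
    case (real r)
    have rT: "T n \<le> r" using Suc.IH real by simp
    have "T (Suc n) \<le> t" if t: "r < t" "X t \<omega> \<noteq> X r \<omega>" for t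
    proof (rule ccontr)
      assume "\<not> T (Suc n) \<le> t"
      then have tn: "t < T (Suc n)" by simp
      then have ex: "\<exists>m. t < T (Suc m)" "\<exists>m. r < T (Suc m)"
        using t(1) by (auto intro!: exI[of _ n])
      have "(LEAST m. t < T (Suc m)) \<le> n"
        using tn by (rule Least_le)
      moreover have "n \<le> (LEAST m. r < T (Suc m))"
      proof (rule ccontr)
        assume "\<not> n \<le> (LEAST m. r < T (Suc m))"
        then have "T (Suc (LEAST m. r < T (Suc m))) \<le> T n"
          using mono by (simp add: monoD)
        then show False
          using LeastI_ex[OF ex(2)] rT by simp
      qed
      moreover have "(LEAST m. r < T (Suc m)) \<le> (LEAST m. t < T (Suc m))"
        using LeastI_ex[OF ex(1)] t(1) by (intro Least_le) simp
      ultimately have "(LEAST m. t < T (Suc m)) = (LEAST m. r < T (Suc m))"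
        by simp
      then have "X t \<omega> = X r \<omega>"
        using X[of t] X[of r] ex by simp
      then show False using t(2) by simp
    qed
    then have "ereal (T (Suc n)) \<le> Inf {ereal t | t. jump_time X n \<omega> < ereal t \<and> X t \<omega> \<noteq> X (real_of_ereal (jump_time X n \<omega>)) \<omega>}"
      using real by (auto intro!: Inf_greatest)
    then show ?thesis by simp
  qed (use Suc.IH in auto)
qed

locale chemostat =
  fixes k D s_in :: real and K :: "nat \<Rightarrow> real" and \<mu> :: "real \<Rightarrow> real" and \<mu>max :: real
  assumes k_pos: "0 < k" and D_pos: "0 < D" and s_in_pos: "0 < s_in"
    and K_pos: "\<And>i. i \<in> {1..5} \<Longrightarrow> 0 < K i"
    and \<mu>_nonneg: "\<And>s. 0 \<le> s \<Longrightarrow> 0 \<le> \<mu> s" and \<mu>_le: "\<And>s. 0 \<le> s \<Longrightarrow> \<mu> s \<le> \<mu>max"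
begin

abbreviation "\<Lambda> \<equiv> chem_total k D s_in K \<mu>"
abbreviation "jump_chain \<equiv> chem_chain k D s_in K \<mu>"
abbreviation "jump_epoch \<equiv> chem_T k D s_in K \<mu>"

definition max_step :: real where
  "max_step = 1 / K 1 + 1 / K 3"

definition rate_slope :: real where
  "rate_slope = (K 1 * \<mu>max + K 2 * k * \<mu>max + K 3 * D * s_in + K 4 * D + K 5 * D) * max 1 max_step"

lemma K1: "0 < K 1" and K2: "0 < K 2" and K3: "0 < K 3" and K4: "0 < K 4" and K5: "0 < K 5"
  using K_pos by auto

lemma \<mu>max_nonneg: "0 \<le> \<mu>max"
  using \<mu>_nonneg[of 0] \<mu>_le[of 0] by simp

lemma max_step_pos: "0 < max_step"
  unfolding max_step_def using K1 K3 by (simp add: add_pos_pos)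

lemma rate_slope_pos: "0 < rate_slope"
  unfolding rate_slope_def using K1 K2 K3 K4 K5 k_pos D_pos s_in_pos \<mu>max_nonneg
  by (intro mult_pos_pos add_nonneg_pos add_pos_nonneg) auto

lemma chem_jump_bounds:
  assumes "0 \<le> fst x" and "0 \<le> snd x"
  shows "0 \<le> fst (x + chem_jump K i x)" and "0 \<le> snd (x + chem_jump K i x)"
    and "fst (x + chem_jump K i x) + snd (x + chem_jump K i x) \<le> fst x + snd x + max_step"
proof -
  have "min 1 (K j * y) / K j \<le> y" "0 \<le> min 1 (K j * y) / K j" if "0 < K j" "0 \<le> y" for j y
    using that by (auto simp: min_def field_simps)
  note removal = this[OF K2 assms(2)] this[OF K4 assms(1)] this[OF K5 assms(2)]
  show "0 \<le> fst (x + chem_jump K i x)" "0 \<le> snd (x + chem_jump K i x)"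
    "fst (x + chem_jump K i x) + snd (x + chem_jump K i x) \<le> fst x + snd x + max_step"
    using assms removal K1 K3 max_step_pos by (auto simp: chem_jump_def Let_def max_step_def)
qed

lemma chem_chain_bounds:
  assumes "0 \<le> fst (X0 \<omega>)" and "0 \<le> snd (X0 \<omega>)"
  shows "0 \<le> fst (jump_chain U X0 n \<omega>) \<and> 0 \<le> snd (jump_chain U X0 n \<omega>)
    \<and> fst (jump_chain U X0 n \<omega>) + snd (jump_chain U X0 n \<omega>) \<le> fst (X0 \<omega>) + snd (X0 \<omega>) + n * max_step"
proof (induction n)
  case (Suc n)
  then show ?case
    using chem_jump_bounds[of "jump_chain U X0 n \<omega>" "chem_select k D s_in K \<mu> (jump_chain U X0 n \<omega>) (U n \<omega>)"]
    by (auto simp: Let_def algebra_simps)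
qed (use assms in simp)

lemma chem_total_ge:
  assumes "0 \<le> fst x" and "0 \<le> snd x"
  shows "K 3 * D * s_in \<le> \<Lambda> x"
  unfolding chem_total_eq using assms K1 K2 K4 K5 k_pos D_pos \<mu>_nonneg[of "snd x"]
  by (simp add: add_increasing add_increasing2)

lemma chem_total_pos:
  assumes "0 \<le> fst x" and "0 \<le> snd x"
  shows "0 < \<Lambda> x"
  using chem_total_ge[OF assms] K3 D_pos s_in_pos by (smt (verit) mult_pos_pos)

lemma chem_total_le_affine:
  assumes "0 \<le> fst x" and "0 \<le> snd x"
  shows "\<Lambda> x \<le> (K 1 * \<mu>max + K 2 * k * \<mu>max + K 3 * D * s_in + K 4 * D + K 5 * D) * (1 + fst x + snd x)"
proof -
  have "(K 1 + K 2 * k) * (\<mu> (snd x) * fst x) \<le> (K 1 + K 2 * k) * (\<mu>max * fst x)"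
    using assms \<mu>_le K1 K2 k_pos by (intro mult_left_mono mult_right_mono) auto
  then have "K 1 * \<mu> (snd x) * fst x + K 2 * k * \<mu> (snd x) * fst x \<le> (K 1 + K 2 * k) * \<mu>max * fst x"
    by (simp add: algebra_simps)
  moreover have "(K 1 + K 2 * k) * \<mu>max * fst x \<le> (K 1 + K 2 * k) * \<mu>max * (1 + fst x + snd x)"
    using assms K1 K2 k_pos \<mu>max_nonneg by (intro mult_left_mono) auto
  moreover have "K 3 * D * s_in + K 4 * D * fst x + K 5 * D * snd x
      \<le> (K 3 * D * s_in + K 4 * D + K 5 * D) * (1 + fst x + snd x)"
    using assms K3 K4 K5 D_pos s_in_pos
    by (simp add: algebra_simps add_increasing add_increasing2 mult_nonneg_nonneg)
  ultimately show ?thesis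
    unfolding chem_total_eq by (simp add: algebra_simps)
qed

lemma chem_total_chain_le:
  assumes "0 \<le> fst (X0 \<omega>)" and "0 \<le> snd (X0 \<omega>)"
  shows "\<Lambda> (jump_chain U X0 j \<omega>) \<le> rate_slope * (1 + fst (X0 \<omega>) + snd (X0 \<omega>) + j)"
proof -
  define c0 where "c0 = K 1 * \<mu>max + K 2 * k * \<mu>max + K 3 * D * s_in + K 4 * D + K 5 * D"
  define A where "A = 1 + fst (X0 \<omega>) + snd (X0 \<omega>)"
  have c0: "0 \<le> c0"
    unfolding c0_def using K1 K2 K3 K4 K5 k_pos D_pos s_in_pos \<mu>max_nonneg by simp
  define Y where "Y = jump_chain U X0 j \<omega>"
  have Y: "0 \<le> fst Y" "0 \<le> snd Y" "fst Y + snd Y \<le> fst (X0 \<omega>) + snd (X0 \<omega>) + j * max_step"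
    using chem_chain_bounds[of X0 \<omega> U j, OF assms] by (auto simp: Y_def)
  have "\<Lambda> Y \<le> c0 * (1 + fst Y + snd Y)"
    using chem_total_le_affine[OF Y(1,2)] by (simp add: c0_def)
  also have "\<dots> \<le> c0 * (A + j * max_step)"
    using Y c0 by (intro mult_left_mono) (auto simp: A_def)
  also have "A + j * max_step \<le> max 1 max_step * (A + j)"
  proof -
    have "A \<le> max 1 max_step * A"
      using assms mult_right_mono[of 1 "max 1 max_step" A] by (simp add: A_def)
    moreover have "j * max_step \<le> max 1 max_step * j"
      using mult_left_mono[of max_step "max 1 max_step" "real j"] by (simp add: mult.commute)
    ultimately show ?thesis by (simp add: algebra_simps)
  qed
  finally have "\<Lambda> Y \<le> c0 * (max 1 max_step * (A + j))"
    using c0 by (simp add: mult_left_mono)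
  then show ?thesis
    by (simp add: Y_def A_def rate_slope_def c0_def mult_ac)
qed

lemma chem_T_ge_weighted_sum:
  assumes "0 \<le> fst (X0 \<omega>)" and "0 \<le> snd (X0 \<omega>)" and "\<And>j. 0 \<le> E j \<omega>"
  shows "(\<Sum>j<n. E j \<omega> / (rate_slope * (1 + fst (X0 \<omega>) + snd (X0 \<omega>) + j))) \<le> jump_epoch E U X0 n \<omega>"
  unfolding chem_T_eq_sum
proof (rule sum_mono)
  fix j
  show "E j \<omega> / (rate_slope * (1 + fst (X0 \<omega>) + snd (X0 \<omega>) + j)) \<le> E j \<omega> / \<Lambda> (jump_chain U X0 j \<omega>)"
    using assms chem_total_chain_le[of X0 \<omega>, OF assms(1,2)] chem_chain_bounds[of X0 \<omega>, OF assms(1,2)]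
    by (intro divide_left_mono mult_pos_pos chem_total_pos rate_slope_pos) auto
qed

lemma mono_chem_T:
  assumes "0 \<le> fst (X0 \<omega>)" and "0 \<le> snd (X0 \<omega>)" and "\<And>j. 0 \<le> E j \<omega>"
  shows "mono (\<lambda>n. jump_epoch E U X0 n \<omega>)"
proof (rule incseq_SucI)
  fix n
  have "0 < \<Lambda> (jump_chain U X0 n \<omega>)"
    using chem_chain_bounds[of X0 \<omega>, OF assms(1,2)] by (intro chem_total_pos) auto
  then show "jump_epoch E U X0 n \<omega> \<le> jump_epoch E U X0 (Suc n) \<omega>"
    using assms(3)[of n] by simp
qed

lemma chem_T_le_jump_time:
  assumes "0 \<le> fst (X0 \<omega>)" and "0 \<le> snd (X0 \<omega>)" and "\<And>j. 0 \<le> E j \<omega>"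
  shows "ereal (jump_epoch E U X0 n \<omega>) \<le> jump_time (chem_X k D s_in K \<mu> E U X0) n \<omega>"
  by (rule ereal_le_jump_time[OF mono_chem_T[of X0 \<omega> E, OF assms]]) (auto simp: chem_X_def)

lemma chem_T_ge_harmonic:
  assumes "0 \<le> fst (X0 \<omega>)" and "0 \<le> snd (X0 \<omega>)" and E: "\<And>j. 0 \<le> E j \<omega>"
  shows "(\<Sum>j<n. E j \<omega> / (real j + 1)) / (rate_slope * (1 + fst (X0 \<omega>) + snd (X0 \<omega>))) \<le> jump_epoch E U X0 n \<omega>"
proof -
  define A where "A = 1 + fst (X0 \<omega>) + snd (X0 \<omega>)"
  have A: "1 \<le> A" using assms by (simp add: A_def)
  have "(\<Sum>j<n. E j \<omega> / (real j + 1)) / (rate_slope * A) = (\<Sum>j<n. E j \<omega> / (rate_slope * (A * (real j + 1))))"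
    by (simp add: sum_divide_distrib mult_ac)
  also have "\<dots> \<le> (\<Sum>j<n. E j \<omega> / (rate_slope * (A + j)))"
  proof (rule sum_mono)
    fix j
    have "A + j \<le> A * (real j + 1)"
      using A mult_right_mono[OF A, of "real j"] by (simp add: algebra_simps)
    then show "E j \<omega> / (rate_slope * (A * (real j + 1))) \<le> E j \<omega> / (rate_slope * (A + j))"
      using A E[of j] rate_slope_pos by (intro divide_left_mono mult_left_mono mult_pos_pos) auto
  qed
  also have "\<dots> \<le> jump_epoch E U X0 n \<omega>"
    using chem_T_ge_weighted_sum[of X0 \<omega> E, OF assms] by (simp add: A_def)
  finally show ?thesis by (simp add: A_def)
qed

lemma chem_X_cases:
  obtains m where "chem_X k D s_in K \<mu> E U X0 t \<omega> \<in> {(0, 0), jump_chain U X0 m \<omega>}"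
    and "\<And>n. n \<in> {1..m} \<Longrightarrow> jump_epoch E U X0 n \<omega> \<le> t"
proof (cases "\<exists>n. t < jump_epoch E U X0 (Suc n) \<omega>")
  case True
  define m where "m = (LEAST n. t < jump_epoch E U X0 (Suc n) \<omega>)"
  have "jump_epoch E U X0 n \<omega> \<le> t" if "n \<in> {1..m}" for n
  proof -
    have "n - 1 < m" and "Suc (n - 1) = n" using that by auto
    then show ?thesis
      using not_less_Least[of "n - 1" "\<lambda>n. t < jump_epoch E U X0 (Suc n) \<omega>"] by (simp add: m_def)
  qed
  then show ?thesis
    using that[of m] True by (simp add: chem_X_def m_def)
qed (use that[of 0] in \<open>simp add: chem_X_def\<close>)

lemma norm_chem_chain_le:
  assumes "0 \<le> fst (X0 \<omega>)" and "0 \<le> snd (X0 \<omega>)"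
  shows "norm (jump_chain U X0 m \<omega>) \<le> 2 * norm (X0 \<omega>) + m * max_step"
proof -
  have Y: "0 \<le> fst (jump_chain U X0 m \<omega>)" "0 \<le> snd (jump_chain U X0 m \<omega>)"
    "fst (jump_chain U X0 m \<omega>) + snd (jump_chain U X0 m \<omega>) \<le> fst (X0 \<omega>) + snd (X0 \<omega>) + m * max_step"
    using chem_chain_bounds[of X0 \<omega>, OF assms] by auto
  have "norm (jump_chain U X0 m \<omega>) \<le> fst (jump_chain U X0 m \<omega>) + snd (jump_chain U X0 m \<omega>)"
    using norm_Pair_le[of "fst (jump_chain U X0 m \<omega>)" "snd (jump_chain U X0 m \<omega>)"] Y by simp
  moreover have "fst (X0 \<omega>) \<le> norm (X0 \<omega>)" "snd (X0 \<omega>) \<le> norm (X0 \<omega>)"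
    using norm_fst_le[of "fst (X0 \<omega>)" "snd (X0 \<omega>)"] norm_snd_le[of "snd (X0 \<omega>)" "fst (X0 \<omega>)"]
    by auto
  ultimately show ?thesis using Y by linarith
qed

lemma inverse_weighted_sum_le_chem_T:
  assumes "0 \<le> fst (X0 \<omega>)" and "0 \<le> snd (X0 \<omega>)" and E: "\<And>j. 0 \<le> E j \<omega>"
    and a: "1 + fst (X0 \<omega>) + snd (X0 \<omega>) \<le> real a"
  shows "(\<Sum>j\<in>{a..<n}. E j \<omega> / real j) \<le> 2 * rate_slope * jump_epoch E U X0 n \<omega>"
proof -
  define A where "A = 1 + fst (X0 \<omega>) + snd (X0 \<omega>)"
  have A: "1 \<le> A" using assms by (simp add: A_def)
  have c: "0 < rate_slope" by (rule rate_slope_pos)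
  have "E j \<omega> / real j \<le> 2 * rate_slope * (E j \<omega> / (rate_slope * (A + j)))" if "j \<in> {a..<n}" for j
  proof -
    have j: "A \<le> real j" "1 \<le> real j" using that a A by (auto simp: A_def)
    have "E j \<omega> / real j = 2 * rate_slope * (E j \<omega> / (rate_slope * (2 * j)))"
      using c j by (simp add: field_simps)
    also have "\<dots> \<le> 2 * rate_slope * (E j \<omega> / (rate_slope * (A + j)))"
      using c j A E[of j] by (intro mult_left_mono divide_left_mono mult_pos_pos) auto
    finally show ?thesis .
  qed
  then have "(\<Sum>j\<in>{a..<n}. E j \<omega> / real j) \<le> 2 * rate_slope * (\<Sum>j\<in>{a..<n}. E j \<omega> / (rate_slope * (A + j)))"
    by (auto simp: sum_distrib_left intro: sum_mono)
  also have "(\<Sum>j\<in>{a..<n}. E j \<omega> / (rate_slope * (A + j))) \<le> (\<Sum>j<n. E j \<omega> / (rate_slope * (A + j)))"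
    using E c A by (intro sum_mono2) auto
  also have "\<dots> \<le> jump_epoch E U X0 n \<omega>"
    using chem_T_ge_weighted_sum[of X0 \<omega> E, OF assms(1-3)] by (simp add: A_def)
  finally show ?thesis using c by (simp add: mult_left_mono)
qed

lemma chem_X_moment_pathwise:
  assumes X0: "0 \<le> fst (X0 \<omega>)" "0 \<le> snd (X0 \<omega>)" and E: "\<And>j. 0 \<le> E j \<omega>" and p: "1 \<le> p"
    and a: "1 + fst (X0 \<omega>) + snd (X0 \<omega>) \<le> real a"
  obtains m where "norm (chem_X k D s_in K \<mu> E U X0 t \<omega>) powr p
      \<le> 4 powr p * norm (X0 \<omega>) powr p + (2 * max_step) powr p * (\<Sum>n\<in>{1..m}. p * real n powr (p - 1))"
    and "\<And>n. n \<in> {1..m} \<Longrightarrow> (\<Sum>j\<in>{a..<n}. E j \<omega> / real j) \<le> 2 * rate_slope * t"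
proof -
  obtain m where Xt: "chem_X k D s_in K \<mu> E U X0 t \<omega> \<in> {(0, 0), jump_chain U X0 m \<omega>}"
    and T: "\<And>n. n \<in> {1..m} \<Longrightarrow> jump_epoch E U X0 n \<omega> \<le> t"
    using chem_X_cases[of E U X0 t \<omega>] by blast
  have "norm (chem_X k D s_in K \<mu> E U X0 t \<omega>) \<le> 2 * norm (X0 \<omega>) + m * max_step"
    using Xt norm_chem_chain_le[of X0 \<omega>, OF X0] max_step_pos by auto
  then have "norm (chem_X k D s_in K \<mu> E U X0 t \<omega>) powr p \<le> (2 * norm (X0 \<omega>) + m * max_step) powr p"
    using p by (intro powr_mono2) auto
  also have "\<dots> \<le> 2 powr p * ((2 * norm (X0 \<omega>)) powr p + (m * max_step) powr p)"
    using p max_step_pos by (intro powr_add_le) auto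
  also have "\<dots> = 4 powr p * norm (X0 \<omega>) powr p + (2 * max_step) powr p * real m powr p"
    using max_step_pos by (simp add: powr_mult algebra_simps flip: powr_mult[of 2 2])
  also have "\<dots> \<le> 4 powr p * norm (X0 \<omega>) powr p + (2 * max_step) powr p * (\<Sum>n\<in>{1..m}. p * real n powr (p - 1))"
    using powr_le_sum_derivative[OF p, of m] by (intro add_left_mono mult_left_mono) auto
  finally show ?thesis
    using that inverse_weighted_sum_le_chem_T[of X0 \<omega> E, OF X0 E a] T rate_slope_pos
    by (smt (verit) mult_left_mono)
qed

end

section \<open>Non-explosion and moment bounds\<close>

locale random_chemostat = chemostat k D s_in K \<mu> \<mu>max + prob_space M
  for k D s_in :: real and K :: "nat \<Rightarrow> real" and \<mu> :: "real \<Rightarrow> real" and \<mu>max :: real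
    and M :: "'a measure" +
  fixes X0 :: "'a \<Rightarrow> real \<times> real" and E U :: "nat \<Rightarrow> 'a \<Rightarrow> real"
  assumes X0_measurable[measurable]: "X0 \<in> borel_measurable M"
    and X0_nonneg: "\<And>\<omega>. \<omega> \<in> space M \<Longrightarrow> 0 \<le> fst (X0 \<omega>) \<and> 0 \<le> snd (X0 \<omega>)"
    and E_exponential: "\<And>j. distributed M lborel (E j) (exponential_density 1)"
    and indep_E_U: "indep_vars (\<lambda>_. borel) (case_sum E U) UNIV"
    and indep_X0_E_U: "indep_set
            {X0 -` S \<inter> space M | S. S \<in> sets (borel :: (real \<times> real) measure)}
            {(\<lambda>\<omega> i. case_sum E U i \<omega>) -` S \<inter> space M | S. S \<in> sets (Pi\<^sub>M UNIV (\<lambda>_. (borel :: real measure)))}"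
begin

abbreviation "X \<equiv> chem_X k D s_in K \<mu> E U X0"

lemma E_measurable[measurable]: "E j \<in> borel_measurable M"
  using distributed_measurable[OF E_exponential] by simp

lemma indep_E: "indep_vars (\<lambda>_. borel) E UNIV"
  using indep_vars_reindex[OF indep_vars_subset[OF indep_E_U], of Inl UNIV] by simp

lemma AE_E_nonneg: "AE \<omega> in M. \<forall>j. 0 \<le> E j \<omega>"
  using AE_exponential_nonneg[OF E_exponential] by (simp add: AE_all_countable)

theorem non_explosion: "AE \<omega> in M. (\<lambda>n. jump_time X n \<omega>) \<longlonglongrightarrow> \<infinity>"
  using AE_space AE_E_nonneg AE_exponential_harmonic_sum_unbounded[OF E_exponential indep_E]
proof eventually_elim
  case (elim \<omega>)
  then have X0: "0 \<le> fst (X0 \<omega>)" "0 \<le> snd (X0 \<omega>)" and E: "\<And>j. 0 \<le> E j \<omega>"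
    using X0_nonneg by auto
  define c where "c = rate_slope * (1 + fst (X0 \<omega>) + snd (X0 \<omega>))"
  have c: "0 < c" using X0 rate_slope_pos by (simp add: c_def)
  show ?case
    unfolding Lim_PInfty
  proof
    fix B
    obtain n0 where n0: "B * c < (\<Sum>j<n0. E j \<omega> / (real j + 1))"
      using elim by blast
    have "ereal B \<le> jump_time X n \<omega>" if "n0 \<le> n" for n
    proof -
      have "B \<le> (\<Sum>j<n0. E j \<omega> / (real j + 1)) / c"
        using n0 c by (simp add: le_divide_eq)
      also have "\<dots> \<le> jump_epoch E U X0 n0 \<omega>"
        using chem_T_ge_harmonic[of X0 \<omega> E, OF X0 E] by (simp add: c_def)
      also have "\<dots> \<le> jump_epoch E U X0 n \<omega>"
        using monoD[OF mono_chem_T[of X0 \<omega> E U, OF X0 E] that] by simp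
      finally show ?thesis
        using chem_T_le_jump_time[of X0 \<omega> E, OF X0 E, of U n]
        by (meson ereal_less_eq(3) order_trans)
    qed
    then show "\<exists>N. \<forall>n\<ge>N. ereal B \<le> jump_time X n \<omega>" by blast
  qed
qed

definition init_level :: "nat \<Rightarrow> 'a set" where
  "init_level a = {\<omega>\<in>space M. real a - 1 < 1 + fst (X0 \<omega>) + snd (X0 \<omega>) \<and> 1 + fst (X0 \<omega>) + snd (X0 \<omega>) \<le> real a}"

definition slow_event :: "real \<Rightarrow> nat \<Rightarrow> nat \<Rightarrow> 'a set" where
  "slow_event u a n = {\<omega>\<in>space M. (\<Sum>j\<in>{a..<n}. E j \<omega> / real j) \<le> u}"

definition slow_weight :: "real \<Rightarrow> real \<Rightarrow> 'a \<Rightarrow> ennreal" where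
  "slow_weight p u \<omega> =
     (\<Sum>a. \<Sum>n. ennreal (p * real n powr (p - 1)) * indicator (init_level a \<inter> slow_event u a n) \<omega>)"

lemma X0_measurable_pair[measurable]: "X0 \<in> M \<rightarrow>\<^sub>M borel \<Otimes>\<^sub>M borel"
  using X0_measurable by (simp add: borel_prod)

lemma sets_init_level[measurable]: "init_level a \<in> sets M"
  unfolding init_level_def by measurable

lemma sets_slow_event[measurable]: "slow_event u a n \<in> sets M"
  unfolding slow_event_def by measurable

lemma borel_measurable_slow_weight[measurable]: "slow_weight p u \<in> borel_measurable M"
  unfolding slow_weight_def by measurable

lemma mem_init_level_iff:
  assumes "\<omega> \<in> space M"
  shows "\<omega> \<in> init_level a \<longleftrightarrow> a = nat \<lceil>1 + fst (X0 \<omega>) + snd (X0 \<omega>)\<rceil>"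
proof -
  define A where "A = 1 + fst (X0 \<omega>) + snd (X0 \<omega>)"
  have "1 \<le> A" using X0_nonneg[OF assms] by (simp add: A_def)
  have "\<omega> \<in> init_level a \<longleftrightarrow> real a - 1 < A \<and> A \<le> real a"
    using assms by (simp add: init_level_def A_def)
  also have "\<dots> \<longleftrightarrow> \<lceil>A\<rceil> = int a"
    by (simp add: ceiling_eq_iff)
  also have "\<dots> \<longleftrightarrow> a = nat \<lceil>A\<rceil>"
    using \<open>1 \<le> A\<close> by auto
  finally show ?thesis by (simp add: A_def)
qed

lemma moment_le_slow_weight:
  assumes \<omega>: "\<omega> \<in> space M" and E: "\<And>j. 0 \<le> E j \<omega>" and p: "1 \<le> p" and t: "t \<le> T"
  shows "ennreal (norm (X t \<omega>) powr p)
    \<le> ennreal (4 powr p * norm (X0 \<omega>) powr p) + ennreal ((2 * max_step) powr p) * slow_weight p (2 * rate_slope * T) \<omega>"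
proof -
  define a where "a = nat \<lceil>1 + fst (X0 \<omega>) + snd (X0 \<omega>)\<rceil>"
  have X0: "0 \<le> fst (X0 \<omega>)" "0 \<le> snd (X0 \<omega>)" using X0_nonneg[OF \<omega>] by auto
  have a: "1 + fst (X0 \<omega>) + snd (X0 \<omega>) \<le> real a"
    unfolding a_def by linarith
  define w where "w n = p * real n powr (p - 1)" for n :: nat
  obtain m where Xt: "norm (X t \<omega>) powr p \<le> 4 powr p * norm (X0 \<omega>) powr p + (2 * max_step) powr p * (\<Sum>n\<in>{1..m}. w n)"
    and slow: "\<And>n. n \<in> {1..m} \<Longrightarrow> (\<Sum>j\<in>{a..<n}. E j \<omega> / real j) \<le> 2 * rate_slope * t"
    using chem_X_moment_pathwise[of X0 \<omega> E p a U t, OF X0 E p a] unfolding w_def by blast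
  have "(\<Sum>n\<in>{1..m}. ennreal (w n)) = (\<Sum>n\<in>{1..m}. ennreal (w n) * indicator (init_level a \<inter> slow_event (2 * rate_slope * T) a n) \<omega>)"
  proof (intro sum.cong refl)
    fix n assume "n \<in> {1..m}"
    then have "\<omega> \<in> slow_event (2 * rate_slope * T) a n"
      using slow[of n] t \<omega> rate_slope_pos by (auto simp: slow_event_def intro: order_trans)
    then show "ennreal (w n) = ennreal (w n) * indicator (init_level a \<inter> slow_event (2 * rate_slope * T) a n) \<omega>"
      using mem_init_level_iff[OF \<omega>] by (simp add: a_def)
  qed
  also have "\<dots> \<le> (\<Sum>n. ennreal (w n) * indicator (init_level a \<inter> slow_event (2 * rate_slope * T) a n) \<omega>)"
    by (rule sum_le_suminf) auto
  also have "\<dots> \<le> slow_weight p (2 * rate_slope * T) \<omega>"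
    unfolding slow_weight_def w_def
    using sum_le_suminf[of "\<lambda>a. \<Sum>n. ennreal (p * real n powr (p - 1)) * indicator (init_level a \<inter> slow_event (2 * rate_slope * T) a n) \<omega>" "{a}"]
    by simp
  finally have "(\<Sum>n\<in>{1..m}. ennreal (w n)) \<le> slow_weight p (2 * rate_slope * T) \<omega>" .
  moreover have "ennreal (norm (X t \<omega>) powr p)
      \<le> ennreal (4 powr p * norm (X0 \<omega>) powr p) + ennreal ((2 * max_step) powr p) * (\<Sum>n\<in>{1..m}. ennreal (w n))"
  proof -
    have w: "0 \<le> w n" for n using p by (simp add: w_def)
    have "ennreal (norm (X t \<omega>) powr p)
        \<le> ennreal (4 powr p * norm (X0 \<omega>) powr p + (2 * max_step) powr p * (\<Sum>n\<in>{1..m}. w n))"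
      using Xt by (rule ennreal_leI)
    also have "\<dots> = ennreal (4 powr p * norm (X0 \<omega>) powr p) + ennreal ((2 * max_step) powr p) * ennreal (\<Sum>n\<in>{1..m}. w n)"
      using w by (simp only: ennreal_plus ennreal_mult' sum_nonneg mult_nonneg_nonneg powr_ge_zero)
    finally show ?thesis
      using w by (simp add: sum_ennreal)
  qed
  ultimately show ?thesis
    by (meson add_left_mono mult_left_mono order_trans zero_le)
qed

lemma prob_slow_event_le:
  assumes r: "0 \<le> r"
  shows "prob (slow_event u a n) \<le> exp (r * u) * (\<Prod>j\<in>{a..<n}. 1 / (1 + r / real j))"
proof -
  have "(\<Sum>j\<in>{a..<n}. r / real j * E j \<omega>) = r * (\<Sum>j\<in>{a..<n}. E j \<omega> / real j)" for \<omega>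
    by (simp add: sum_distrib_left)
  then have "slow_event u a n \<subseteq> {\<omega>\<in>space M. (\<Sum>j\<in>{a..<n}. r / real j * E j \<omega>) \<le> r * u}"
    using r by (auto simp: slow_event_def mult_left_mono)
  then have "prob (slow_event u a n) \<le> prob {\<omega>\<in>space M. (\<Sum>j\<in>{a..<n}. r / real j * E j \<omega>) \<le> r * u}"
    by (intro finite_measure_mono) measurable
  also have "\<dots> \<le> exp (r * u) * (\<Prod>j\<in>{a..<n}. 1 / (1 + r / real j))"
    using r by (intro exponential_weighted_sum_le_prob[OF E_exponential indep_E]) auto
  finally show ?thesis .
qed

lemma emeasure_init_level_inter_slow_event:
  "emeasure M (init_level a \<inter> slow_event u a n) = emeasure M (init_level a) * emeasure M (slow_event u a n)"
proof -
  let ?S = "{x :: real \<times> real. real a - 1 < 1 + fst x + snd x \<and> 1 + fst x + snd x \<le> real a}"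
  let ?T = "{f :: nat + nat \<Rightarrow> real. (\<Sum>j\<in>{a..<n}. f (Inl j) / real j) \<le> u}"
  have "{x\<in>space (borel \<Otimes>\<^sub>M borel). real a - 1 < 1 + fst x + snd x \<and> 1 + fst x + snd x \<le> (real a :: real)}
      \<in> sets (borel \<Otimes>\<^sub>M (borel :: real measure))"
    by measurable
  then have S: "?S \<in> sets borel"
    unfolding borel_prod by simp
  have "{f\<in>space (Pi\<^sub>M UNIV (\<lambda>_. borel)). (\<Sum>j\<in>{a..<n}. f (Inl j) / real j) \<le> u}
      \<in> sets (Pi\<^sub>M UNIV (\<lambda>_. (borel :: real measure)))"
    by measurable
  then have T: "?T \<in> sets (Pi\<^sub>M UNIV (\<lambda>_. (borel :: real measure)))"
    by (simp add: space_PiM)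
  have "init_level a \<in> {X0 -` S \<inter> space M | S. S \<in> sets (borel :: (real \<times> real) measure)}"
    using S by (intro CollectI exI[of _ ?S]) (auto simp: init_level_def)
  moreover have "slow_event u a n \<in>
      {(\<lambda>\<omega> i. case_sum E U i \<omega>) -` S \<inter> space M | S. S \<in> sets (Pi\<^sub>M UNIV (\<lambda>_. (borel :: real measure)))}"
    using T by (intro CollectI exI[of _ ?T]) (auto simp: slow_event_def)
  ultimately show ?thesis
    using indep_setD[OF indep_X0_E_U] by (simp add: emeasure_eq_measure ennreal_mult')
qed

lemma expected_slow_count_le:
  assumes p: "1 \<le> p" and r: "p + 1 \<le> real r"
  shows "(\<Sum>n. ennreal (p * real n powr (p - 1)) * emeasure M (slow_event u a n))
    \<le> ennreal (p * (2 + exp (r * u)) * real (a + r + 1) powr p)"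
proof (rule suminf_le_const[OF summableI])
  fix N
  define q where "q n = min 1 (exp (r * u) * (\<Prod>j\<in>{a..<n}. 1 / (1 + real r / real j)))" for n
  have q: "0 \<le> q n" for n
    by (auto simp: q_def intro!: mult_nonneg_nonneg prod_nonneg)
  have "emeasure M (slow_event u a n) \<le> ennreal (q n)" for n
    using prob_slow_event_le[of "real r" u a n] by (simp add: q_def emeasure_eq_measure ennreal_leI)
  then have "(\<Sum>n<N. ennreal (p * real n powr (p - 1)) * emeasure M (slow_event u a n))
      \<le> (\<Sum>n<N. ennreal (p * real n powr (p - 1) * q n))"
    using p q by (intro sum_mono) (simp add: ennreal_mult' mult_left_mono)
  also have "\<dots> = ennreal (\<Sum>n<N. p * real n powr (p - 1) * q n)"
    using p q by (intro sum_ennreal) auto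
  also have "\<dots> \<le> ennreal (p * (2 + exp (r * u)) * real (a + r + 1) powr p)"
    using tail_weighted_power_sum_le[OF p r, of "exp (r * u)" a N] by (intro ennreal_leI) (simp add: q_def)
  finally show "(\<Sum>n<N. ennreal (p * real n powr (p - 1)) * emeasure M (slow_event u a n))
      \<le> ennreal (p * (2 + exp (r * u)) * real (a + r + 1) powr p)" .
qed

lemma init_level_powr_le:
  assumes \<omega>: "\<omega> \<in> init_level a" and p: "0 \<le> p"
  shows "real (a + r + 1) powr p \<le> 2 powr p * ((real r + 3) powr p + 2 powr p * norm (X0 \<omega>) powr p)"
proof -
  have "fst (X0 \<omega>) \<le> norm (X0 \<omega>)" "snd (X0 \<omega>) \<le> norm (X0 \<omega>)"
    using norm_fst_le[of "fst (X0 \<omega>)" "snd (X0 \<omega>)"] norm_snd_le[of "snd (X0 \<omega>)" "fst (X0 \<omega>)"]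
    by auto
  then have "real (a + r + 1) \<le> (real r + 3) + 2 * norm (X0 \<omega>)"
    using \<omega> by (auto simp: init_level_def)
  then have "real (a + r + 1) powr p \<le> ((real r + 3) + 2 * norm (X0 \<omega>)) powr p"
    using p by (intro powr_mono2) auto
  also have "\<dots> \<le> 2 powr p * ((real r + 3) powr p + (2 * norm (X0 \<omega>)) powr p)"
    using p by (intro powr_add_le) auto
  finally show ?thesis
    by (simp add: powr_mult)
qed

lemma nn_integral_slow_weight_finite:
  assumes p: "1 \<le> p" and X0_moment: "(\<integral>\<^sup>+\<omega>. ennreal (norm (X0 \<omega>) powr p) \<partial>M) < \<infinity>"
  shows "(\<integral>\<^sup>+\<omega>. slow_weight p u \<omega> \<partial>M) < \<infinity>"
proof -
  define r where "r = nat \<lceil>p\<rceil> + 1"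
  have r: "p + 1 \<le> real r" unfolding r_def using p by linarith
  define C where "C = p * (2 + exp (r * u))"
  have C: "0 \<le> C" using p by (simp add: C_def)
  define h where "h a = ennreal (C * real (a + r + 1) powr p)" for a
  have "(\<integral>\<^sup>+\<omega>. slow_weight p u \<omega> \<partial>M)
      = (\<Sum>a. \<Sum>n. ennreal (p * real n powr (p - 1)) * emeasure M (init_level a \<inter> slow_event u a n))"
    unfolding slow_weight_def
    by (subst nn_integral_suminf, measurable, subst nn_integral_suminf, measurable)
       (simp add: nn_integral_cmult_indicator)
  also have "\<dots> = (\<Sum>a. emeasure M (init_level a) * (\<Sum>n. ennreal (p * real n powr (p - 1)) * emeasure M (slow_event u a n)))"
  proof (intro suminf_cong)
    fix a
    have "(\<lambda>n. ennreal (p * real n powr (p - 1)) * emeasure M (init_level a \<inter> slow_event u a n))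
        = (\<lambda>n. emeasure M (init_level a) * (ennreal (p * real n powr (p - 1)) * emeasure M (slow_event u a n)))"
      by (simp add: emeasure_init_level_inter_slow_event mult.left_commute)
    then show "(\<Sum>n. ennreal (p * real n powr (p - 1)) * emeasure M (init_level a \<inter> slow_event u a n))
        = emeasure M (init_level a) * (\<Sum>n. ennreal (p * real n powr (p - 1)) * emeasure M (slow_event u a n))"
      by (simp add: ennreal_suminf_cmult)
  qed
  also have "\<dots> \<le> (\<Sum>a. emeasure M (init_level a) * h a)"
    using expected_slow_count_le[OF p r] by (intro suminf_le summableI mult_left_mono) (auto simp: h_def C_def)
  also have "\<dots> = (\<integral>\<^sup>+\<omega>. (\<Sum>a. h a * indicator (init_level a) \<omega>) \<partial>M)"
    by (subst nn_integral_suminf, measurable) (simp add: nn_integral_cmult_indicator mult_ac)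
  also have "\<dots> \<le> (\<integral>\<^sup>+\<omega>. ennreal (C * 2 powr p * (real r + 3) powr p) + ennreal (C * 2 powr p * 2 powr p) * ennreal (norm (X0 \<omega>) powr p) \<partial>M)"
  proof (rule nn_integral_mono)
    fix \<omega> assume \<omega>: "\<omega> \<in> space M"
    define a where "a = nat \<lceil>1 + fst (X0 \<omega>) + snd (X0 \<omega>)\<rceil>"
    have "(\<lambda>a'. h a' * indicator (init_level a') \<omega>) = (\<lambda>a'. if a' = a then h a' else 0)"
      using mem_init_level_iff[OF \<omega>] by (auto simp: a_def)
    then have "(\<Sum>a'. h a' * indicator (init_level a') \<omega>) = h a"
      using sums_unique[OF sums_single[of a h]] by simp
    also have "\<dots> \<le> ennreal (C * 2 powr p * (real r + 3) powr p + C * 2 powr p * 2 powr p * norm (X0 \<omega>) powr p)"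
    proof -
      have "\<omega> \<in> init_level a"
        using mem_init_level_iff[OF \<omega>] by (simp add: a_def)
      then have "C * real (a + r + 1) powr p \<le> C * (2 powr p * ((real r + 3) powr p + 2 powr p * norm (X0 \<omega>) powr p))"
        using init_level_powr_le[of \<omega> a p r] p C by (intro mult_left_mono) auto
      then show ?thesis
        unfolding h_def by (intro ennreal_leI) (simp add: algebra_simps)
    qed
    also have "\<dots> = ennreal (C * 2 powr p * (real r + 3) powr p) + ennreal (C * 2 powr p * 2 powr p) * ennreal (norm (X0 \<omega>) powr p)"
      using C by (simp add: ennreal_plus ennreal_mult')
    finally show "(\<Sum>a'. h a' * indicator (init_level a') \<omega>)
        \<le> ennreal (C * 2 powr p * (real r + 3) powr p) + ennreal (C * 2 powr p * 2 powr p) * ennreal (norm (X0 \<omega>) powr p)" .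
  qed
  also have "\<dots> = ennreal (C * 2 powr p * (real r + 3) powr p) + ennreal (C * 2 powr p * 2 powr p) * (\<integral>\<^sup>+\<omega>. ennreal (norm (X0 \<omega>) powr p) \<partial>M)"
    by (subst nn_integral_add, measurable, subst nn_integral_cmult, measurable) (simp add: emeasure_space_1)
  also have "\<dots> < \<infinity>"
    using X0_moment by (simp add: ennreal_mult_less_top)
  finally show ?thesis .
qed

theorem moment_bound:
  assumes p: "1 \<le> p" and X0_moment: "(\<integral>\<^sup>+\<omega>. ennreal (norm (X0 \<omega>) powr p) \<partial>M) < \<infinity>"
  shows "\<exists>C>0. \<forall>t\<le>T. (\<integral>\<^sup>+\<omega>. ennreal (norm (X t \<omega>) powr p) \<partial>M) \<le> ennreal C"
proof -
  define B where "B \<omega> = ennreal (4 powr p * norm (X0 \<omega>) powr p)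
    + ennreal ((2 * max_step) powr p) * slow_weight p (2 * rate_slope * T) \<omega>" for \<omega>
  have "(\<integral>\<^sup>+\<omega>. B \<omega> \<partial>M) = (\<integral>\<^sup>+\<omega>. ennreal (4 powr p * norm (X0 \<omega>) powr p) \<partial>M)
      + (\<integral>\<^sup>+\<omega>. ennreal ((2 * max_step) powr p) * slow_weight p (2 * rate_slope * T) \<omega> \<partial>M)"
    unfolding B_def by (rule nn_integral_add) measurable
  moreover have "(\<integral>\<^sup>+\<omega>. ennreal (4 powr p * norm (X0 \<omega>) powr p) \<partial>M)
      = ennreal (4 powr p) * (\<integral>\<^sup>+\<omega>. ennreal (norm (X0 \<omega>) powr p) \<partial>M)"
    by (simp only: ennreal_mult'[OF powr_ge_zero]) (rule nn_integral_cmult, measurable)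
  moreover have "(\<integral>\<^sup>+\<omega>. ennreal ((2 * max_step) powr p) * slow_weight p (2 * rate_slope * T) \<omega> \<partial>M)
      = ennreal ((2 * max_step) powr p) * (\<integral>\<^sup>+\<omega>. slow_weight p (2 * rate_slope * T) \<omega> \<partial>M)"
    by (rule nn_integral_cmult) measurable
  ultimately have B: "(\<integral>\<^sup>+\<omega>. B \<omega> \<partial>M) < \<infinity>"
    using X0_moment nn_integral_slow_weight_finite[OF p X0_moment] by (simp add: ennreal_mult_less_top)
  have "(\<integral>\<^sup>+\<omega>. ennreal (norm (X t \<omega>) powr p) \<partial>M) \<le> (\<integral>\<^sup>+\<omega>. B \<omega> \<partial>M)" if t: "t \<le> T" for t
  proof (rule nn_integral_mono_AE)
    show "AE \<omega> in M. ennreal (norm (X t \<omega>) powr p) \<le> B \<omega>"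
      using AE_space AE_E_nonneg
      by eventually_elim (unfold B_def, rule moment_le_slow_weight[OF _ _ p t], auto)
  qed
  moreover have "(\<integral>\<^sup>+\<omega>. B \<omega> \<partial>M) \<le> ennreal (enn2real (\<integral>\<^sup>+\<omega>. B \<omega> \<partial>M) + 1)"
  proof -
    have "(\<integral>\<^sup>+\<omega>. B \<omega> \<partial>M) = ennreal (enn2real (\<integral>\<^sup>+\<omega>. B \<omega> \<partial>M))"
      using B by (simp add: less_top)
    also have "\<dots> \<le> ennreal (enn2real (\<integral>\<^sup>+\<omega>. B \<omega> \<partial>M) + 1)"
      by (rule ennreal_leI) simp
    finally show ?thesis .
  qed
  moreover have "0 < enn2real (\<integral>\<^sup>+\<omega>. B \<omega> \<partial>M) + 1"
    by (simp add: add_nonneg_pos)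
  ultimately show ?thesis
    by (meson order_trans)
qed

end

theorem mainTheorem3:
  fixes M :: "'a measure"
    and k D s_in :: real
    and K :: "nat \<Rightarrow> real"
    and \<mu> :: "real \<Rightarrow> real"
    and X0 :: "'a \<Rightarrow> real \<times> real"
    and E U :: "nat \<Rightarrow> 'a \<Rightarrow> real"
  assumes "k > 0" and "D > 0" and "s_in > 0"
    and "\<forall>i\<in>{1..5}. K i > 0"
    and "\<mu> 0 = 0" and "\<forall>s>0. \<mu> s > 0"
    and "\<exists>\<mu>max. \<forall>s\<ge>0. \<mu> s \<le> \<mu>max"
    and "continuous (at 0 within {0..}) \<mu>"
    and "\<mu> \<in> borel_measurable borel"
    and "prob_space M"
    and "X0 \<in> borel_measurable M"
    and "\<forall>\<omega>\<in>space M. fst (X0 \<omega>) \<ge> 0 \<and> snd (X0 \<omega>) \<ge> 0"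
    and "\<forall>n. distributed M lborel (E n) (exponential_density 1)"
    and "\<forall>n. U n \<in> borel_measurable M \<and> distr M lborel (U n) = uniform_measure lborel {0..1}"
    and "prob_space.indep_vars M (\<lambda>_. borel) (case_sum E U) UNIV"
    and "prob_space.indep_set M
            {X0 -` S \<inter> space M | S. S \<in> sets (borel :: (real \<times> real) measure)}
            {(\<lambda>\<omega> i. case_sum E U i \<omega>) -` S \<inter> space M | S. S \<in> sets (Pi\<^sub>M UNIV (\<lambda>_. (borel :: real measure)))}"
  shows "(AE \<omega> in M. (\<lambda>n. jump_time (chem_X k D s_in K \<mu> E U X0) n \<omega>) \<longlonglongrightarrow> \<infinity>)
       \<and> (\<forall>p\<ge>1. (\<integral>\<^sup>+\<omega>. ennreal (norm (X0 \<omega>) powr p) \<partial>M) < \<infinity> \<longrightarrow>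
            (\<forall>T>0. \<exists>C>0. \<forall>t\<in>{0..T}.
               (\<integral>\<^sup>+\<omega>. ennreal (norm (chem_X k D s_in K \<mu> E U X0 t \<omega>) powr p) \<partial>M) \<le> ennreal C))"
proof -
  obtain \<mu>max where \<mu>max: "\<forall>s\<ge>0. \<mu> s \<le> \<mu>max"
    using assms(7) by blast
  have \<mu>_nonneg: "\<forall>s\<ge>0. 0 \<le> \<mu> s"
    using assms(5,6) by (metis less_eq_real_def)
  interpret chemostat k D s_in K \<mu> \<mu>max
    using assms(1-4) \<mu>max \<mu>_nonneg by unfold_locales auto
  interpret random_chemostat k D s_in K \<mu> \<mu>max M X0 E U
    by (intro random_chemostat.intro chemostat_axioms assms(10) random_chemostat_axioms.intro)
      (use assms(11-13,15,16) in auto)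
  have "\<exists>C>0. \<forall>t\<in>{0..T}. (\<integral>\<^sup>+\<omega>. ennreal (norm (X t \<omega>) powr p) \<partial>M) \<le> ennreal C"
    if p: "1 \<le> p" and X0_moment: "(\<integral>\<^sup>+\<omega>. ennreal (norm (X0 \<omega>) powr p) \<partial>M) < \<infinity>" for p T
  proof -
    obtain C where "0 < C" "\<forall>t\<le>T. (\<integral>\<^sup>+\<omega>. ennreal (norm (X t \<omega>) powr p) \<partial>M) \<le> ennreal C"
      using moment_bound[OF p X0_moment] by blast
    then show ?thesis by auto
  qed
  then show ?thesis
    using non_explosion by blast
qed

end
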